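(* Assume $(\phi1)$, $(\phi3)$ and $(\phi4)$. Then: (i) $J_1(s,b):=\phi(\frac{s^2+b^2}{2})b^2$ is increasing and convex in $b$ on $[0,\infty)$ for every fixed $s\in\mathbb{R}$; (ii) $J_2(s,b):=\Phi(\frac{s^2+b^2}{2})-\frac1N\phi(\frac{s^2+b^2}{2})b^2$ is increasing and convex in $b$ on $[0,\infty)$ for every fixed $s\in\mathbb{R}$.
   Context: $N\ge3$. $\phi:[0,\infty)\to\mathbb{R}$, $\Phi(s)=\int_0^s\phi$. $(\phi1)$: $\phi$ continuous, $0<\phi_0\le\phi\le\phi_1$ for constants $\phi_0<\phi_1$. $(\phi3)$: $\phi\in C^1([0,\infty))$, $s|\phi'(s)|\le C$ and $\phi_0\le\phi(s)+2s\phi'(s)$ for all $s\ge0$. $(\phi4)$: $\phi\in C^2([0,\infty))$, $s^2|\phi''(s)|\le C$, and for all $s\ge0$: $3\phi'(s)+2s|\phi''(s)|\le0$ and $0\le\phi(s)+5s\phi'(s)-2s^2|\phi''(s)|$. *)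

theory Defs
  imports "HOL-Analysis.Analysis"
begin

definition Phi :: "(real \<Rightarrow> real) \<Rightarrow> real \<Rightarrow> real" where
  "Phi phi s = integral {0..s} phi"

definition cond_phi1 :: "(real \<Rightarrow> real) \<Rightarrow> real \<Rightarrow> real \<Rightarrow> bool" where
  "cond_phi1 phi p0 p1 \<longleftrightarrow> continuous_on {0..} phi \<and> 0 < p0 \<and> p0 < p1 \<and>
     (\<forall>s\<ge>0. p0 \<le> phi s \<and> phi s \<le> p1)"

definition cond_phi3 :: "(real \<Rightarrow> real) \<Rightarrow> (real \<Rightarrow> real) \<Rightarrow> real \<Rightarrow> bool" where
  "cond_phi3 phi dphi p0 \<longleftrightarrow>
     (\<forall>s\<ge>0. (phi has_real_derivative dphi s) (at s within {0..})) \<and>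
     continuous_on {0..} dphi \<and>
     (\<exists>C. \<forall>s\<ge>0. s * \<bar>dphi s\<bar> \<le> C) \<and>
     (\<forall>s\<ge>0. p0 \<le> phi s + 2 * s * dphi s)"

definition cond_phi4 :: "(real \<Rightarrow> real) \<Rightarrow> (real \<Rightarrow> real) \<Rightarrow> (real \<Rightarrow> real) \<Rightarrow> bool" where
  "cond_phi4 phi dphi ddphi \<longleftrightarrow>
     (\<forall>s\<ge>0. (dphi has_real_derivative ddphi s) (at s within {0..})) \<and>
     continuous_on {0..} ddphi \<and>
     (\<exists>C. \<forall>s\<ge>0. s^2 * \<bar>ddphi s\<bar> \<le> C) \<and>
     (\<forall>s\<ge>0. 3 * dphi s + 2 * s * \<bar>ddphi s\<bar> \<le> 0) \<and>
     (\<forall>s\<ge>0. 0 \<le> phi s + 5 * s * dphi s - 2 * s^2 * \<bar>ddphi s\<bar>)"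

definition J1 :: "(real \<Rightarrow> real) \<Rightarrow> real \<Rightarrow> real \<Rightarrow> real" where
  "J1 phi s b = phi ((s^2 + b^2) / 2) * b^2"

definition J2 :: "nat \<Rightarrow> (real \<Rightarrow> real) \<Rightarrow> real \<Rightarrow> real \<Rightarrow> real" where
  "J2 N phi s b = Phi phi ((s^2 + b^2) / 2) - (1 / real N) * phi ((s^2 + b^2) / 2) * b^2"

end

theory Submission
  imports Defs
begin

text \<open>Write \<open>t = (s\<^sup>2 + b\<^sup>2)/2\<close> and \<open>u = b\<^sup>2\<close>, so that \<open>0 \<le> u \<le> 2 t\<close>. The first two
  \<open>b\<close>-derivatives of \<open>J\<^sub>1\<close> are \<open>b (2\<phi> + u\<phi>')\<close> and \<open>2\<phi> + 5u\<phi>' + u\<^sup>2\<phi>''\<close>, those of \<open>J\<^sub>2\<close> are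
  \<open>b ((1 - 2/N)\<phi> - u\<phi>'/N)\<close> and \<open>(1 - 2/N)(\<phi> + u\<phi>') + (-3u\<phi>' - u\<^sup>2\<phi>'')/N\<close>, all evaluated at \<open>t\<close>.
  Condition (\<phi>4) forces \<open>\<phi>' \<le> 0\<close> and bounds \<open>u\<^sup>2|\<phi>''|\<close> by \<open>2ut|\<phi>''|\<close>, which is at most both
  \<open>-3u\<phi>'\<close> and \<open>4t\<^sup>2|\<phi>''|\<close>; together with \<open>u\<phi>' \<ge> 2t\<phi>'\<close> this makes all four expressions
  nonnegative for \<open>b \<ge> 0\<close>, and nonnegative first and second derivatives give monotonicity and
  convexity.\<close>

lemma mono_convex_on_atLeast_if_derivatives_nonneg:
  fixes f f' f'' :: "real \<Rightarrow> real"
  assumes f': "\<And>x. a \<le> x \<Longrightarrow> (f has_real_derivative f' x) (at x)"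
    and f'': "\<And>x. a \<le> x \<Longrightarrow> (f' has_real_derivative f'' x) (at x)"
    and f'_nonneg: "\<And>x. a \<le> x \<Longrightarrow> 0 \<le> f' x"
    and f''_nonneg: "\<And>x. a \<le> x \<Longrightarrow> 0 \<le> f'' x"
  shows "mono_on {a..} f \<and> convex_on {a..} f"
proof
  have nondecreasing: "g x \<le> g y"
    if "\<And>z. a \<le> z \<Longrightarrow> (g has_real_derivative g' z) (at z)" "\<And>z. a \<le> z \<Longrightarrow> 0 \<le> g' z"
      "a \<le> x" "x \<le> y" for g g' :: "real \<Rightarrow> real" and x y
  proof (rule DERIV_nonneg_imp_nondecreasing[OF \<open>x \<le> y\<close>])
    fix z assume "x \<le> z"
    with \<open>a \<le> x\<close> show "\<exists>w. (g has_real_derivative w) (at z) \<and> 0 \<le> w"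
      using that(1,2) by (meson order_trans)
  qed
  show "mono_on {a..} f"
    by (rule mono_onI) (use nondecreasing[OF f' f'_nonneg] in auto)
  show "convex_on {a..} f"
    by (rule convex_on_realI[where f'=f']) (use f' nondecreasing[OF f'' f''_nonneg] in auto)
qed

definition half_sq_norm :: "real \<Rightarrow> real \<Rightarrow> real" where
  "half_sq_norm s b = (s\<^sup>2 + b\<^sup>2) / 2"

lemma half_sq_norm_nonneg: "0 \<le> half_sq_norm s b"
  by (simp add: half_sq_norm_def)

lemma sq_le_twice_half_sq_norm: "b\<^sup>2 \<le> 2 * half_sq_norm s b"
  by (simp add: half_sq_norm_def)

lemma has_real_derivative_comp_half_sq_norm:
  assumes "\<And>t. 0 \<le> t \<Longrightarrow> (h has_real_derivative h' t) (at t within {0..})"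
  shows "((\<lambda>b. h (half_sq_norm s b)) has_real_derivative h' (half_sq_norm s b) * b) (at b)"
proof -
  have inner: "(half_sq_norm s has_real_derivative b) (at b)"
    unfolding half_sq_norm_def[abs_def] by (auto intro!: derivative_eq_intros)
  have "(h has_real_derivative h' (half_sq_norm s b)) (at (half_sq_norm s b) within {0..})"
    using assms half_sq_norm_nonneg by blast
  then have "(h has_real_derivative h' (half_sq_norm s b))
      (at (half_sq_norm s b) within range (half_sq_norm s))"
    by (rule has_field_derivative_subset) (auto simp: half_sq_norm_nonneg)
  from DERIV_image_chain[OF this inner] show ?thesis
    by (simp add: o_def)
qed

lemma Phi_has_real_derivative:
  assumes "continuous_on {0..} phi" "0 \<le> t"
  shows "(Phi phi has_real_derivative phi t) (at t within {0..})"
proof -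
  have "continuous_on {0..t+1} phi"
    using assms(1) by (rule continuous_on_subset) auto
  with assms(2) have "((\<lambda>x. integral {0..x} phi) has_real_derivative phi t) (at t within {0..t+1})"
    by (simp add: integral_has_real_derivative)
  moreover have "at t within {0..t+1} = at t within {0..}"
    by (rule at_within_nhd[where S="{..<t+1}"]) auto
  ultimately show ?thesis
    unfolding Phi_def[abs_def] by simp
qed

text \<open>Condition (\<phi>4) at a point \<open>t\<close>, with \<open>a, d, e\<close> standing for \<open>\<phi>(t), \<phi>'(t), \<phi>''(t)\<close>.\<close>

lemma phi4_pointwise_consequences:
  fixes a d e t u :: real
  assumes a: "0 \<le> a"
    and phi4_1: "3 * d + 2 * t * \<bar>e\<bar> \<le> 0"
    and phi4_2: "0 \<le> a + 5 * t * d - 2 * t\<^sup>2 * \<bar>e\<bar>"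
    and u: "0 \<le> u" "u \<le> 2 * t"
  shows "d \<le> 0" and "0 \<le> a + u * d" and "0 \<le> 2 * a + 5 * u * d + u\<^sup>2 * e"
    and "0 \<le> - 3 * u * d - u\<^sup>2 * e"
proof -
  have t: "0 \<le> t" using u by linarith
  have "0 \<le> 2 * t * \<bar>e\<bar>" using t by simp
  with phi4_1 show d: "d \<le> 0" by linarith
  have ud: "2 * t * d \<le> u * d"
    using u d by (simp add: mult_right_mono_neg)
  have sq_e: "u\<^sup>2 * \<bar>e\<bar> \<le> u * (2 * t * \<bar>e\<bar>)"
  proof -
    have "u * \<bar>e\<bar> \<le> 2 * t * \<bar>e\<bar>" using u by (simp add: mult_right_mono)
    then show ?thesis using u by (simp add: power2_eq_square mult_left_mono mult.assoc)
  qed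
  have by_phi4_1: "u * (2 * t * \<bar>e\<bar>) \<le> - 3 * u * d"
    using mult_left_mono[OF phi4_1 \<open>0 \<le> u\<close>] by (simp add: algebra_simps)
  have by_u: "u * (2 * t * \<bar>e\<bar>) \<le> 4 * t\<^sup>2 * \<bar>e\<bar>"
    using mult_right_mono[OF \<open>u \<le> 2 * t\<close>, of "2 * t * \<bar>e\<bar>"] t
    by (simp add: power2_eq_square algebra_simps)
  have "\<bar>u\<^sup>2 * e\<bar> = u\<^sup>2 * \<bar>e\<bar>" by (simp add: abs_mult)
  then have e: "- (u\<^sup>2 * \<bar>e\<bar>) \<le> u\<^sup>2 * e" "u\<^sup>2 * e \<le> u\<^sup>2 * \<bar>e\<bar>" by linarith+
  have "0 \<le> t\<^sup>2 * \<bar>e\<bar>" "t * d \<le> 0" using t d by (simp_all add: mult_nonneg_nonpos)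
  then show "0 \<le> a + u * d" using phi4_2 ud by linarith
  show "0 \<le> 2 * a + 5 * u * d + u\<^sup>2 * e" using phi4_2 ud sq_e by_u e by linarith
  show "0 \<le> - 3 * u * d - u\<^sup>2 * e" using sq_e by_phi4_1 e by linarith
qed

lemma J1_eq: "J1 phi s b = phi (half_sq_norm s b) * b\<^sup>2"
  by (simp add: J1_def half_sq_norm_def)

lemma J2_eq: "J2 N phi s b = Phi phi (half_sq_norm s b) - J1 phi s b / real N"
  by (simp add: J2_def J1_def half_sq_norm_def)

context
  fixes phi dphi ddphi :: "real \<Rightarrow> real" and s :: real
  assumes dphi: "\<And>t. 0 \<le> t \<Longrightarrow> (phi has_real_derivative dphi t) (at t within {0..})"
    and ddphi: "\<And>t. 0 \<le> t \<Longrightarrow> (dphi has_real_derivative ddphi t) (at t within {0..})"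
begin

private abbreviation "t b \<equiv> half_sq_norm s b"

lemma phi_comp_has_real_derivative:
  "((\<lambda>b. phi (t b)) has_real_derivative dphi (t b) * b) (at b)"
  by (rule has_real_derivative_comp_half_sq_norm[OF dphi])

lemma dphi_comp_has_real_derivative:
  "((\<lambda>b. dphi (t b)) has_real_derivative ddphi (t b) * b) (at b)"
  by (rule has_real_derivative_comp_half_sq_norm[OF ddphi])

lemma J1_has_real_derivative:
  "(J1 phi s has_real_derivative b * (2 * phi (t b) + b\<^sup>2 * dphi (t b))) (at b)"
  unfolding J1_eq[abs_def]
  by (rule DERIV_cong[OF DERIV_mult'[OF phi_comp_has_real_derivative DERIV_pow]])
    (simp add: algebra_simps power2_eq_square)

lemma J1_second_derivative:
  "((\<lambda>b. b * (2 * phi (t b) + b\<^sup>2 * dphi (t b))) has_real_derivative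
      2 * phi (t b) + 5 * b\<^sup>2 * dphi (t b) + (b\<^sup>2)\<^sup>2 * ddphi (t b)) (at b)"
  by (rule DERIV_cong[OF DERIV_mult'[OF DERIV_ident DERIV_add[OF
        DERIV_cmult[OF phi_comp_has_real_derivative]
        DERIV_mult'[OF DERIV_pow dphi_comp_has_real_derivative]]]])
    (simp add: algebra_simps power2_eq_square)

context
  assumes phi_nonneg: "\<And>x. 0 \<le> x \<Longrightarrow> 0 \<le> phi x"
    and phi4_1: "\<And>x. 0 \<le> x \<Longrightarrow> 3 * dphi x + 2 * x * \<bar>ddphi x\<bar> \<le> 0"
    and phi4_2: "\<And>x. 0 \<le> x \<Longrightarrow> 0 \<le> phi x + 5 * x * dphi x - 2 * x\<^sup>2 * \<bar>ddphi x\<bar>"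
begin

lemma phi4_along_half_sq_norm:
  shows "0 \<le> phi (t b)" and "dphi (t b) \<le> 0" and "0 \<le> phi (t b) + b\<^sup>2 * dphi (t b)"
    and "0 \<le> 2 * phi (t b) + 5 * b\<^sup>2 * dphi (t b) + (b\<^sup>2)\<^sup>2 * ddphi (t b)"
    and "0 \<le> - 3 * b\<^sup>2 * dphi (t b) - (b\<^sup>2)\<^sup>2 * ddphi (t b)"
  using phi4_pointwise_consequences[OF phi_nonneg phi4_1 phi4_2, of "t b" "b\<^sup>2"]
  by (simp_all add: phi_nonneg half_sq_norm_nonneg sq_le_twice_half_sq_norm)

lemma J1_mono_convex: "mono_on {0..} (J1 phi s) \<and> convex_on {0..} (J1 phi s)"
proof (rule mono_convex_on_atLeast_if_derivatives_nonneg
    [OF J1_has_real_derivative J1_second_derivative])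
  fix b :: real assume "0 \<le> b"
  have "0 \<le> phi (t b) + (phi (t b) + b\<^sup>2 * dphi (t b))"
    using phi4_along_half_sq_norm(1,3)[of b] by linarith
  with \<open>0 \<le> b\<close> show "0 \<le> b * (2 * phi (t b) + b\<^sup>2 * dphi (t b))"
    by simp
qed (rule phi4_along_half_sq_norm(4))

lemma J2_mono_convex:
  assumes "continuous_on {0..} phi" and "2 \<le> N"
  shows "mono_on {0..} (J2 N phi s) \<and> convex_on {0..} (J2 N phi s)"
proof -
  have N: "0 < real N" "0 \<le> 1 - 2 / real N"
    using assms(2) by (simp_all add: field_simps)
  have Phi_comp: "((\<lambda>b. Phi phi (t b)) has_real_derivative phi (t b) * b) (at b)" for b
    using has_real_derivative_comp_half_sq_norm Phi_has_real_derivative[OF assms(1)] by blast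
  show ?thesis
  proof (rule mono_convex_on_atLeast_if_derivatives_nonneg)
    show "(J2 N phi s has_real_derivative
        phi (t b) * b - b * (2 * phi (t b) + b\<^sup>2 * dphi (t b)) / real N) (at b)" for b
      unfolding J2_eq[abs_def]
      by (intro DERIV_diff DERIV_cdivide Phi_comp J1_has_real_derivative)
    show "((\<lambda>b. phi (t b) * b - b * (2 * phi (t b) + b\<^sup>2 * dphi (t b)) / real N)
        has_real_derivative (1 - 2 / real N) * (phi (t b) + b\<^sup>2 * dphi (t b)) +
          (- 3 * b\<^sup>2 * dphi (t b) - (b\<^sup>2)\<^sup>2 * ddphi (t b)) / real N) (at b)" for b
      by (rule DERIV_cong[OF DERIV_diff[OF
            DERIV_mult'[OF phi_comp_has_real_derivative DERIV_ident]
            DERIV_cdivide[OF J1_second_derivative]]])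
        (use N in \<open>simp add: field_simps power2_eq_square\<close>)
    fix b :: real assume "0 \<le> b"
    have "0 \<le> (1 - 2 / real N) * phi (t b) - b\<^sup>2 * dphi (t b) / real N"
    proof -
      have "0 \<le> (1 - 2 / real N) * phi (t b)"
        using N phi4_along_half_sq_norm(1) by simp
      moreover have "b\<^sup>2 * dphi (t b) / real N \<le> 0"
        using N phi4_along_half_sq_norm(2)[of b] by (simp add: mult_nonneg_nonpos divide_nonpos_pos)
      ultimately show ?thesis by linarith
    qed
    moreover have "phi (t b) * b - b * (2 * phi (t b) + b\<^sup>2 * dphi (t b)) / real N
        = b * ((1 - 2 / real N) * phi (t b) - b\<^sup>2 * dphi (t b) / real N)"
      using N by (simp add: field_simps)
    ultimately show "0 \<le> phi (t b) * b - b * (2 * phi (t b) + b\<^sup>2 * dphi (t b)) / real N"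
      using \<open>0 \<le> b\<close> by simp
    show "0 \<le> (1 - 2 / real N) * (phi (t b) + b\<^sup>2 * dphi (t b)) +
        (- 3 * b\<^sup>2 * dphi (t b) - (b\<^sup>2)\<^sup>2 * ddphi (t b)) / real N"
      using N phi4_along_half_sq_norm(3,5) by simp
  qed
qed

end

end

theorem lemma6p1:
  fixes N :: nat and phi dphi ddphi :: "real \<Rightarrow> real" and p0 p1 :: real
  assumes "N \<ge> 3"
    and "cond_phi1 phi p0 p1"
    and "cond_phi3 phi dphi p0"
    and "cond_phi4 phi dphi ddphi"
  shows "(\<forall>s::real. mono_on {0..} (J1 phi s) \<and> convex_on {0..} (J1 phi s)) \<and>
         (\<forall>s::real. mono_on {0..} (J2 N phi s) \<and> convex_on {0..} (J2 N phi s))"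
proof -
  from assms(2) have cont: "continuous_on {0..} phi" and nonneg: "\<And>x. 0 \<le> x \<Longrightarrow> 0 \<le> phi x"
    unfolding cond_phi1_def by (auto intro: order_trans[OF less_imp_le])
  from assms(3) have dphi: "\<And>x. 0 \<le> x \<Longrightarrow> (phi has_real_derivative dphi x) (at x within {0..})"
    unfolding cond_phi3_def by auto
  from assms(4) have ddphi: "\<And>x. 0 \<le> x \<Longrightarrow> (dphi has_real_derivative ddphi x) (at x within {0..})"
    and phi4_1: "\<And>x. 0 \<le> x \<Longrightarrow> 3 * dphi x + 2 * x * \<bar>ddphi x\<bar> \<le> 0"
    and phi4_2: "\<And>x. 0 \<le> x \<Longrightarrow> 0 \<le> phi x + 5 * x * dphi x - 2 * x\<^sup>2 * \<bar>ddphi x\<bar>"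
    unfolding cond_phi4_def by auto
  have "N \<ge> 2" using assms(1) by simp
  with J1_mono_convex[OF dphi ddphi nonneg phi4_1 phi4_2] J2_mono_convex[OF dphi ddphi nonneg phi4_1 phi4_2 cont]
  show ?thesis by blast
qed

end
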